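(* Let $K=2$ and suppose that for every horizon $T$ (a multiple of $100$) a valid pair $(\eta,\gamma)=(\eta_T,\gamma_T)$ in the non-trivial regime is chosen. Then there exists $T_0$ such that for all $T\ge T_0$, WSU-UX run on the two-phase loss sequence satisfies $\mathbb{E}[\pi_{t,1}]\le \frac{1}{KT}$ for every round $t$ with $\frac{T_1}{2}\le t\le T_1$.
   Context: WSU-UX. Fix integers $K\ge 2$ and $T\ge 1$ and hyperparameters $\eta,\gamma$. The pair $(\eta,\gamma)$ is called valid if $\eta,\gamma\in(0,1/2)$ and $\eta K/\gamma\le 1/2$. Given a fixed loss sequence $\ell_t\in[0,1]^K$, WSU-UX sets $\pi_{1,i}=1/K$ and in each round $t$: forms $\tilde\pi_{t,i}=(1-\gamma)\pi_{t,i}+\gamma/K$; draws $I_t$ with $\Pr(I_t=i\mid\mathcal F_{t-1})=\tilde\pi_{t,i}$; sets $\hat\ell_{t,i}=\ell_{t,i}\mathbf 1[I_t=i]/\tilde\pi_{t,i}$; and updates $\pi_{t+1,i}=\pi_{t,i}\bigl(1-\eta(\hat\ell_{t,i}-\sum_{j}\pi_{t,j}\hat\ell_{t,j})\bigr)$; $\mathcal F_t$ is the history generated by $I_1,\dots,I_t$. Non-trivial regime: $\eta\ge T^{-2/3}$ and $\gamma\le T^{-1/3}$. Two-phase loss sequence ($K=2$, $T$ a multiple of $100$, $T_1=T/100$): $\ell_{t,1}=1,\ell_{t,2}=0$ for $1\le t\le T_1$ and $\ell_{t,1}=0,\ell_{t,2}=1$ for $T_1<t\le T$. *)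

theory Defs
  imports Complex_Main
begin

text \<open>Arms are indexed 1..K. A history of the first t-1 draws is stored as a list
  with the most recent draw first: [I_(t-1), ..., I_1]. The loss sequence is
  ell t i (round t >= 1, arm i).\<close>

fun wsu_pi :: "nat \<Rightarrow> real \<Rightarrow> real \<Rightarrow> (nat \<Rightarrow> nat \<Rightarrow> real) \<Rightarrow> nat list \<Rightarrow> nat \<Rightarrow> real" where
  "wsu_pi K eta gamma ell [] i = 1 / real K"
| "wsu_pi K eta gamma ell (I # h) i =
     (let p = wsu_pi K eta gamma ell h;
          t = length h + 1;
          pt = (\<lambda>j. (1 - gamma) * p j + gamma / real K);
          lhat = (\<lambda>j. if j = I then ell t j / pt j else 0)
      in p i * (1 - eta * (lhat i - (\<Sum>j\<in>{1..K}. p j * lhat j))))"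

definition wsu_pit :: "nat \<Rightarrow> real \<Rightarrow> real \<Rightarrow> (nat \<Rightarrow> nat \<Rightarrow> real) \<Rightarrow> nat list \<Rightarrow> nat \<Rightarrow> real" where
  "wsu_pit K eta gamma ell h i = (1 - gamma) * wsu_pi K eta gamma ell h i + gamma / real K"

fun hist_prob :: "nat \<Rightarrow> real \<Rightarrow> real \<Rightarrow> (nat \<Rightarrow> nat \<Rightarrow> real) \<Rightarrow> nat list \<Rightarrow> real" where
  "hist_prob K eta gamma ell [] = 1"
| "hist_prob K eta gamma ell (I # h) = hist_prob K eta gamma ell h * wsu_pit K eta gamma ell h I"

definition expected_pi :: "nat \<Rightarrow> real \<Rightarrow> real \<Rightarrow> (nat \<Rightarrow> nat \<Rightarrow> real) \<Rightarrow> nat \<Rightarrow> nat \<Rightarrow> real" where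
  "expected_pi K eta gamma ell t i =
     (\<Sum>h\<in>{h. length h = t - 1 \<and> set h \<subseteq> {1..K}}.
        hist_prob K eta gamma ell h * wsu_pi K eta gamma ell h i)"

definition valid_pair :: "nat \<Rightarrow> real \<Rightarrow> real \<Rightarrow> bool" where
  "valid_pair K eta gamma \<longleftrightarrow>
     0 < eta \<and> eta < 1/2 \<and> 0 < gamma \<and> gamma < 1/2 \<and> eta * real K / gamma \<le> 1/2"

definition nontrivial_regime :: "nat \<Rightarrow> real \<Rightarrow> real \<Rightarrow> bool" where
  "nontrivial_regime T eta gamma \<longleftrightarrow>
     eta \<ge> real T powr (-2/3) \<and> gamma \<le> real T powr (-1/3)"

definition two_phase_loss :: "nat \<Rightarrow> nat \<Rightarrow> nat \<Rightarrow> real" where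
  "two_phase_loss T t i =
     (if t \<le> T div 100 then (if i = 1 then 1 else 0) else (if i = 1 then 0 else 1))"

end

theory Submission imports Defs "HOL-Real_Asymp.Real_Asymp" begin

text \<open>While arm 1 has loss 1 and arm 2 loss 0, drawing arm 2 leaves the weights unchanged,
  and drawing arm 1 (which happens with probability pt = (1-\<gamma>) p + \<gamma>/2, where p = \<pi>(1))
  multiplies p by 1 - \<eta>(1-p)/pt. Averaging over the draw, the conditional expectation of the
  next p is p - \<eta> p (1-p) \<le> (1 - \<eta>/2) p, thanks to the invariant p \<le> 1/2, which holds because
  \<eta>K/\<gamma> \<le> 1/2 keeps the multiplier in [1/2, 1]. Hence E[\<pi>(t,1)] \<le> (1 - \<eta>/2)^(t-1) / 2, and for
  t \<ge> T/200 and \<eta> \<ge> T^(-2/3) this is at most exp(-T^(1/3)/800) / 2 \<le> 1/(2T) once T is large.\<close>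

lemma sum_histories_Suc:
  "(\<Sum>h\<in>{h. length h = Suc n \<and> set h \<subseteq> A}. f h) =
   (\<Sum>h\<in>{h. length h = n \<and> set h \<subseteq> A}. \<Sum>I\<in>A. f (I # h))"
proof -
  let ?H = "{h. length h = n \<and> set h \<subseteq> A}"
  have split: "{h. length h = Suc n \<and> set h \<subseteq> A} = (\<lambda>(I, h). I # h) ` (A \<times> ?H)"
    by (auto simp: length_Suc_conv image_iff)
  have "inj_on (\<lambda>(I, h). I # h) (A \<times> ?H)"
    by (auto simp: inj_on_def)
  then have "(\<Sum>h\<in>{h. length h = Suc n \<and> set h \<subseteq> A}. f h) = (\<Sum>(I, h)\<in>A \<times> ?H. f (I # h))"
    unfolding split by (subst sum.reindex) (simp_all add: case_prod_beta)
  also have "\<dots> = (\<Sum>I\<in>A. \<Sum>h\<in>?H. f (I # h))"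
    by (rule sum.cartesian_product[symmetric])
  also have "\<dots> = (\<Sum>h\<in>?H. \<Sum>I\<in>A. f (I # h))"
    by (rule sum.swap)
  finally show ?thesis .
qed

declare wsu_pi.simps(2) [simp del]

lemma wsu_pi_Cons_zero_loss:
  assumes "ell (length h + 1) I = 0"
  shows "wsu_pi K e g ell (I # h) i = wsu_pi K e g ell h i"
  using assms by (simp add: wsu_pi.simps Let_def cong: if_cong)

lemma sum_atLeastAtMost_1_2: "(\<Sum>j\<in>{1..2::nat}. f j) = f 1 + (f 2 :: real)"
  by (simp add: numeral_2_eq_2)

lemma wsu_pi_Cons_unit_loss:
  fixes e g :: real
  assumes "ell (length h + 1) 1 = 1"
  defines "p \<equiv> wsu_pi 2 e g ell h 1"
    and "pt \<equiv> wsu_pit 2 e g ell h 1"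
  shows "wsu_pi 2 e g ell (1 # h) 1 = p * (1 - e * (1 - p) / pt)"
    and "wsu_pi 2 e g ell (1 # h) 2 = wsu_pi 2 e g ell h 2 * (1 + e * p / pt)"
  unfolding assms(2,3) wsu_pi.simps Let_def sum_atLeastAtMost_1_2 wsu_pit_def
  using assms(1) by (simp_all add: diff_divide_distrib right_diff_distrib)

context
  fixes e g :: real and ell :: "nat \<Rightarrow> nat \<Rightarrow> real" and n :: nat
  assumes valid: "valid_pair 2 e g"
    and arm1_loses: "\<And>t. 1 \<le> t \<Longrightarrow> t \<le> n \<Longrightarrow> ell t 1 = 1 \<and> ell t 2 = 0"
begin

lemma wsu_pit_pos:
  assumes "0 \<le> wsu_pi 2 e g ell h i"
  shows "0 < wsu_pit 2 e g ell h i"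
  unfolding wsu_pit_def using valid assms
  by (intro add_nonneg_pos mult_nonneg_nonneg) (auto simp: valid_pair_def)

lemma arm1_step_size_bounds:
  assumes "0 < p" "p \<le> 1"
  shows "0 \<le> e * (1 - p) / ((1 - g) * p + g / 2)" "e * (1 - p) / ((1 - g) * p + g / 2) \<le> 1/2"
proof -
  have e: "0 < e" and g: "0 < g" "g < 1/2" and eg: "e * 2 / g \<le> 1/2"
    using valid by (auto simp: valid_pair_def)
  have pt: "g / 2 \<le> (1 - g) * p + g / 2" using assms g by simp
  show "0 \<le> e * (1 - p) / ((1 - g) * p + g / 2)" using assms e g by simp
  have "e * (1 - p) / ((1 - g) * p + g / 2) \<le> e / (g / 2)"
    using assms e g pt by (intro frac_le) auto
  also have "\<dots> = e * 2 / g" by simp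
  also have "\<dots> \<le> 1/2" by (fact eg)
  finally show "e * (1 - p) / ((1 - g) * p + g / 2) \<le> 1/2" .
qed

lemma wsu_pi_phase1_invariant:
  assumes "set h \<subseteq> {1..2}" "length h \<le> n"
  shows "0 < wsu_pi 2 e g ell h 1 \<and> wsu_pi 2 e g ell h 1 \<le> 1/2
         \<and> wsu_pi 2 e g ell h 1 + wsu_pi 2 e g ell h 2 = 1"
  using assms
proof (induction h)
  case Nil
  then show ?case by simp
next
  case (Cons I h)
  define p where "p = wsu_pi 2 e g ell h 1"
  define m where "m = e * (1 - p) / wsu_pit 2 e g ell h 1"
  have p: "0 < p" "p \<le> 1/2" "wsu_pi 2 e g ell h 2 = 1 - p"
    using Cons by (auto simp: p_def)
  have loss: "ell (length h + 1) 1 = 1" "ell (length h + 1) 2 = 0"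
    using arm1_loses[of "length h + 1"] Cons.prems by auto
  have pt: "0 < wsu_pit 2 e g ell h 1"
    using p by (intro wsu_pit_pos) (simp add: p_def)
  have m: "0 \<le> m" "m \<le> 1/2"
    using arm1_step_size_bounds[of p] p by (simp_all add: m_def wsu_pit_def p_def)
  consider "I = 1" | "I = 2" using Cons.prems by fastforce
  then show ?case
  proof cases
    case 1
    have new1: "wsu_pi 2 e g ell (1 # h) 1 = p * (1 - m)"
      using wsu_pi_Cons_unit_loss(1)[where ell = ell and h = h, OF loss(1)] by (simp add: m_def p_def)
    have new2: "wsu_pi 2 e g ell (1 # h) 2 = (1 - p) * (1 + e * p / wsu_pit 2 e g ell h 1)"
      using wsu_pi_Cons_unit_loss(2)[where ell = ell and h = h, OF loss(1)] p(3) by (simp add: p_def)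
    have "p * (1 - m) + (1 - p) * (1 + e * p / wsu_pit 2 e g ell h 1) = 1"
      using pt by (simp add: m_def field_simps)
    moreover have "0 < p * (1 - m)" using p m by simp
    moreover have "p * (1 - m) \<le> 1/2" using mult_left_le[of "1 - m" p] p m by linarith
    ultimately show ?thesis using new1 new2 1 by simp
  next
    case 2
    then show ?thesis
      using wsu_pi_Cons_zero_loss[where ell = ell and h = h, OF loss(2)] p by (simp add: p_def)
  qed
qed

lemma hist_prob_phase1_nonneg:
  assumes "set h \<subseteq> {1..2}" "length h \<le> n"
  shows "0 \<le> hist_prob 2 e g ell h"
  using assms
proof (induction h)
  case Nil
  then show ?case by simp
next
  case (Cons I h)
  have "I = 1 \<or> I = 2" using Cons.prems by fastforce
  then have "0 \<le> wsu_pi 2 e g ell h I"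
    using wsu_pi_phase1_invariant[of h] Cons.prems by auto
  then have "0 \<le> wsu_pit 2 e g ell h I"
    using valid by (simp add: wsu_pit_def valid_pair_def)
  then show ?case using Cons by simp
qed

lemma conditional_expectation_contracts:
  assumes "set h \<subseteq> {1..2}" "length h < n"
  shows "(\<Sum>I\<in>{1..2}. hist_prob 2 e g ell (I # h) * wsu_pi 2 e g ell (I # h) 1)
         \<le> (1 - e/2) * (hist_prob 2 e g ell h * wsu_pi 2 e g ell h 1)"
proof -
  define p where "p = wsu_pi 2 e g ell h 1"
  define w where "w = hist_prob 2 e g ell h"
  have p: "0 < p" "p \<le> 1/2" "wsu_pi 2 e g ell h 2 = 1 - p"
    using wsu_pi_phase1_invariant[of h] assms by (auto simp: p_def)
  have w: "0 \<le> w"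
    using hist_prob_phase1_nonneg[of h] assms by (simp add: w_def)
  have loss: "ell (length h + 1) 1 = 1" "ell (length h + 1) 2 = 0"
    using arm1_loses[of "length h + 1"] assms by auto
  have pt: "0 < wsu_pit 2 e g ell h 1"
    using p by (intro wsu_pit_pos) (simp add: p_def)
  have pt2: "wsu_pit 2 e g ell h 2 = 1 - wsu_pit 2 e g ell h 1"
    unfolding wsu_pit_def p(3) by (simp add: p_def algebra_simps)
  have "(\<Sum>I\<in>{1..2}. hist_prob 2 e g ell (I # h) * wsu_pi 2 e g ell (I # h) 1)
        = w * (wsu_pit 2 e g ell h 1 * wsu_pi 2 e g ell (1 # h) 1
               + wsu_pit 2 e g ell h 2 * wsu_pi 2 e g ell (2 # h) 1)"
    unfolding sum_atLeastAtMost_1_2 by (simp add: w_def algebra_simps)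
  also have "\<dots> = w * (wsu_pit 2 e g ell h 1 * (p * (1 - e * (1 - p) / wsu_pit 2 e g ell h 1))
                       + wsu_pit 2 e g ell h 2 * p)"
    using wsu_pi_Cons_unit_loss(1)[where ell = ell and h = h, OF loss(1)]
      wsu_pi_Cons_zero_loss[where ell = ell and h = h, OF loss(2)]
    by (simp add: p_def)
  also have "\<dots> = w * (p - e * p * (1 - p))"
    using pt by (simp add: pt2 field_simps)
  also have "\<dots> \<le> w * ((1 - e/2) * p)"
  proof -
    have "e * p * (1/2) \<le> e * p * (1 - p)"
      using p valid by (intro mult_left_mono) (auto simp: valid_pair_def)
    then show ?thesis using w by (intro mult_left_mono) (auto simp: algebra_simps)
  qed
  finally show ?thesis by (simp add: p_def w_def ac_simps)
qed

lemma expected_pi_phase1_decay: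
  "k \<le> n \<Longrightarrow> expected_pi 2 e g ell (Suc k) 1 \<le> (1 - e/2) ^ k / 2"
proof (induction k)
  case 0
  have "{h :: nat list. length h = 0 \<and> set h \<subseteq> {1..2}} = {[]}" by auto
  then show ?case by (simp add: expected_pi_def)
next
  case (Suc k)
  let ?H = "{h. length h = k \<and> set h \<subseteq> {1..2::nat}}"
  have "expected_pi 2 e g ell (Suc (Suc k)) 1
        = (\<Sum>h\<in>?H. \<Sum>I\<in>{1..2}. hist_prob 2 e g ell (I # h) * wsu_pi 2 e g ell (I # h) 1)"
    unfolding expected_pi_def by (simp add: sum_histories_Suc)
  also have "\<dots> \<le> (\<Sum>h\<in>?H. (1 - e/2) * (hist_prob 2 e g ell h * wsu_pi 2 e g ell h 1))"
    using Suc.prems by (intro sum_mono conditional_expectation_contracts) auto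
  also have "\<dots> = (1 - e/2) * expected_pi 2 e g ell (Suc k) 1"
    by (simp add: expected_pi_def sum_distrib_left)
  also have "\<dots> \<le> (1 - e/2) * ((1 - e/2) ^ k / 2)"
    using Suc valid by (intro mult_left_mono) (auto simp: valid_pair_def)
  finally show ?case by simp
qed

end

lemma eventually_ln_le_cube_root: "eventually (\<lambda>x::real. ln x \<le> x powr (1/3) / 800) at_top"
  by real_asymp

lemma one_minus_half_power_le_inverse:
  fixes e x :: real and k :: nat
  assumes x: "1 \<le> x" and ln_x: "ln x \<le> x powr (1/3) / 800"
    and e: "0 < e" "e < 1/2" "x powr (-2/3) \<le> e" and k: "x / 400 \<le> real k"
  shows "(1 - e/2) ^ k \<le> 1 / x"
proof -
  have "x / 400 * x powr (-2/3) = x powr (1/3) / 400"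
    using x by (simp add: powr_mult_base)
  moreover have "x / 400 * x powr (-2/3) \<le> real k * e"
    using k e x by (intro mult_mono) auto
  ultimately have "ln x \<le> real k * e / 2"
    using ln_x by simp
  have "(1 - e/2) ^ k \<le> exp (-e/2) ^ k"
    using e by (intro power_mono) (auto simp: exp_ge_add_one_self[of "-e/2", simplified])
  also have "\<dots> = exp (- (real k * e / 2))"
    by (simp add: exp_of_nat_mult[symmetric])
  also have "\<dots> \<le> exp (- ln x)"
    using \<open>ln x \<le> real k * e / 2\<close> by simp
  also have "\<dots> = 1 / x"
    using x by (simp add: exp_minus inverse_eq_divide)
  finally show ?thesis .
qed

theorem mainTheorem13:
  fixes eta gamma :: "nat \<Rightarrow> real"
  assumes "\<And>T. T \<ge> 1 \<Longrightarrow> 100 dvd T \<Longrightarrow>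
             valid_pair 2 (eta T) (gamma T) \<and> nontrivial_regime T (eta T) (gamma T)"
  shows "\<exists>T0. \<forall>T. T \<ge> T0 \<longrightarrow> T \<ge> 1 \<longrightarrow> 100 dvd T \<longrightarrow>
           (\<forall>t. real (T div 100) / 2 \<le> real t \<and> t \<le> T div 100 \<longrightarrow>
              expected_pi 2 (eta T) (gamma T) (two_phase_loss T) t 1 \<le> 1 / (2 * real T))"
proof -
  obtain N :: real where N: "\<And>x. N \<le> x \<Longrightarrow> ln x \<le> x powr (1/3) / 800"
    using eventually_ln_le_cube_root unfolding eventually_at_top_linorder by blast
  show ?thesis
  proof (intro exI[of _ "max 400 (nat \<lceil>N\<rceil>)"] allI impI, elim conjE)
    fix T t :: nat
    assume T: "max 400 (nat \<lceil>N\<rceil>) \<le> T" "1 \<le> T" "100 dvd T"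
      and t: "real (T div 100) / 2 \<le> real t" "t \<le> T div 100"
    have valid: "valid_pair 2 (eta T) (gamma T)"
      and e: "real T powr (-2/3) \<le> eta T" "0 < eta T" "eta T < 1/2"
      using assms[OF T(2,3)] by (auto simp: nontrivial_regime_def valid_pair_def)
    have "real T / 200 \<le> real t"
      using t(1) T(3) by (simp add: real_of_nat_div)
    then have k: "real T / 400 \<le> real (t - 1)" and "t = Suc (t - 1)"
      using T(1) by (auto simp: of_nat_diff)
    have "expected_pi 2 (eta T) (gamma T) (two_phase_loss T) (Suc (t - 1)) 1
          \<le> (1 - eta T/2) ^ (t - 1) / 2"
      using t(2) by (intro expected_pi_phase1_decay[OF valid]) (auto simp: two_phase_loss_def)
    then have "expected_pi 2 (eta T) (gamma T) (two_phase_loss T) t 1 \<le> (1 - eta T/2) ^ (t - 1) / 2"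
      using \<open>t = Suc (t - 1)\<close> by simp
    also have "\<dots> \<le> 1 / real T / 2"
      using one_minus_half_power_le_inverse[OF _ N e(2,3,1) k] T(1) by simp
    finally show "expected_pi 2 (eta T) (gamma T) (two_phase_loss T) t 1 \<le> 1 / (2 * real T)"
      by simp
  qed
qed

end
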